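(* The cobordism group of two-dimensional geometric graphs is nontrivial: there exists a graph $G$ in which every unit sphere is a cycle $C_n$ with $n\ge4$, such that $G$ is not the boundary of any three-dimensional geometric graph with boundary.
   Context: All graphs are finite simple graphs. For a vertex $x$, $S(x)$ is the subgraph induced by the neighbors of $x$. A graph is contractible if it is $K_1$, or, inductively, if there is a vertex $x$ with both $S(x)$ and the subgraph induced by $V\setminus\{x\}$ contractible. $\mathcal{G}_0$: graphs without edges; $\mathcal{S}_0$: those with two vertices; $\mathcal{B}_0$: those with one vertex. For $d\ge1$: $\mathcal{G}_d$ is the class of graphs in which every $S(x)$ lies in $\mathcal{S}_{d-1}\cup\mathcal{B}_{d-1}$; the boundary $\delta G$ is the subgraph induced by vertices with $S(x)\in\mathcal{B}_{d-1}$, and the interior must be nonempty; $\mathcal{B}_d$: contractible graphs in $\mathcal{G}_d$ with boundary in $\mathcal{S}_{d-1}$; $\mathcal{S}_d$: non-contractible graphs in $\mathcal{G}_d$ such that removing any single vertex yields a graph in $\mathcal{B}_d$. A three-dimensional geometric graph with boundary is a graph in $\mathcal{G}_3$. Two closed two-dimensional geometric graphs are cobordant if their disjoint union is the boundary $\delta H$ of some three-dimensional geometric graph with boundary $H$; cobordism classes form a group under disjoint union, whose neutral element is the class of graphs cobordant to the empty graph (boundaries). *)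

theory Defs
  imports Main
begin

text \<open>A graph is a pair (V, E) of a vertex set and a set of ordered pairs (the
edge relation, stored symmetrically).  Finite simple graphs are the well-formed ones.\<close>

type_synonym 'a graph = "'a set \<times> ('a \<times> 'a) set"

definition wf_graph :: "'a graph \<Rightarrow> bool" where
  "wf_graph G \<longleftrightarrow> finite (fst G) \<and> snd G \<subseteq> fst G \<times> fst G
     \<and> (\<forall>x y. (x, y) \<in> snd G \<longrightarrow> (y, x) \<in> snd G)
     \<and> (\<forall>x. (x, x) \<notin> snd G)"

definition induced :: "'a graph \<Rightarrow> 'a set \<Rightarrow> 'a graph" where
  "induced G W = (W \<inter> fst G, snd G \<inter> ((W \<inter> fst G) \<times> (W \<inter> fst G)))"

definition sphere :: "'a graph \<Rightarrow> 'a \<Rightarrow> 'a graph" where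
  "sphere G x = induced G {y. (x, y) \<in> snd G}"

definition delete_vertex :: "'a graph \<Rightarrow> 'a \<Rightarrow> 'a graph" where
  "delete_vertex G x = induced G (fst G - {x})"

inductive contractible :: "'a graph \<Rightarrow> bool" where
  K1: "contractible ({v}, {})"
| step: "\<lbrakk>wf_graph G; x \<in> fst G; contractible (sphere G x);
          contractible (delete_vertex G x)\<rbrakk> \<Longrightarrow> contractible G"

definition graph_iso :: "'a graph \<Rightarrow> 'b graph \<Rightarrow> bool" where
  "graph_iso G H \<longleftrightarrow> (\<exists>f. bij_betw f (fst G) (fst H) \<and>
     (\<forall>x\<in>fst G. \<forall>y\<in>fst G. (x, y) \<in> snd G \<longleftrightarrow> (f x, f y) \<in> snd H))"

definition cycle_graph :: "nat \<Rightarrow> nat graph" where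
  "cycle_graph n = ({0..<n}, {(i, j). i < n \<and> j < n \<and> (j = (i + 1) mod n \<or> i = (j + 1) mod n)})"

text \<open>Interior / boundary of a graph relative to the sphere/ball classes of
dimension d-1 (passed as predicates Sp, Bp).\<close>
definition interior_set :: "('a graph \<Rightarrow> bool) \<Rightarrow> 'a graph \<Rightarrow> 'a set" where
  "interior_set Sp G = {x \<in> fst G. Sp (sphere G x)}"

definition boundary_of :: "('a graph \<Rightarrow> bool) \<Rightarrow> 'a graph \<Rightarrow> 'a graph" where
  "boundary_of Bp G = induced G {x \<in> fst G. Bp (sphere G x)}"

text \<open>One step of the recursive definition: from (G_{d-1}, S_{d-1}, B_{d-1}) to
(G_d, S_d, B_d).\<close>
definition geo_step ::
  "('a graph \<Rightarrow> bool) \<times> ('a graph \<Rightarrow> bool) \<times> ('a graph \<Rightarrow> bool)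
   \<Rightarrow> ('a graph \<Rightarrow> bool) \<times> ('a graph \<Rightarrow> bool) \<times> ('a graph \<Rightarrow> bool)" where
  "geo_step T =
    (let Sp = fst (snd T); Bp = snd (snd T);
         Gd = (\<lambda>G. wf_graph G \<and> (\<forall>x\<in>fst G. Sp (sphere G x) \<or> Bp (sphere G x))
                    \<and> interior_set Sp G \<noteq> {});
         Bd = (\<lambda>G. contractible G \<and> Gd G \<and> Sp (boundary_of Bp G));
         Sd = (\<lambda>G. \<not> contractible G \<and> Gd G \<and> (\<forall>x\<in>fst G. Bd (delete_vertex G x)))
     in (Gd, Sd, Bd))"

primrec classes :: "nat \<Rightarrow> ('a graph \<Rightarrow> bool) \<times> ('a graph \<Rightarrow> bool) \<times> ('a graph \<Rightarrow> bool)" where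
  "classes 0 =
     ((\<lambda>G. wf_graph G \<and> snd G = {}),
      (\<lambda>G. wf_graph G \<and> snd G = {} \<and> card (fst G) = 2),
      (\<lambda>G. wf_graph G \<and> snd G = {} \<and> card (fst G) = 1))"
| "classes (Suc d) = geo_step (classes d)"

definition geoG :: "nat \<Rightarrow> 'a graph \<Rightarrow> bool" where "geoG d = fst (classes d)"
definition geoS :: "nat \<Rightarrow> 'a graph \<Rightarrow> bool" where "geoS d = fst (snd (classes d))"
definition geoB :: "nat \<Rightarrow> 'a graph \<Rightarrow> bool" where "geoB d = snd (snd (classes d))"

definition geo_boundary :: "nat \<Rightarrow> 'a graph \<Rightarrow> 'a graph" where
  "geo_boundary d G = boundary_of (geoB (d - 1)) G"

end

theory Submission
  imports Defs
begin

text \<open>The number of cliques of a graph is its Euler characteristic modulo 2, so spheres have an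
  even and balls an odd number of cliques. Let H be three-dimensional and suppose the unit spheres
  of its boundary are circles. Counting the pairs (s, c) of cliques of H with s a vertex or an edge
  and s \<subset> c, a clique with m vertices is counted m + (m choose 2) times, which is even as
  m \<le> 4. So the number of vertices and edges of H whose links have an odd number of cliques is
  even. These are the vertices and edges whose links are balls, i.e. exactly those of the boundary,
  and hence the boundary has an even number of vertices plus edges. A 12-vertex triangulation of the
  projective plane has 12 + 33.\<close>

definition cliques :: "'a graph \<Rightarrow> 'a set set" where
  "cliques A = {c. c \<subseteq> fst A \<and> c \<noteq> {} \<and> (\<forall>x\<in>c. \<forall>y\<in>c. x \<noteq> y \<longrightarrow> (x, y) \<in> snd A)}"

definition clique_count :: "'a graph \<Rightarrow> nat" where
  "clique_count A = card (cliques A)"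

definition link :: "'a graph \<Rightarrow> 'a set \<Rightarrow> 'a graph" where
  "link A s = induced A {y. \<forall>x\<in>s. (x, y) \<in> snd A}"

lemma finite_cliques: "wf_graph A \<Longrightarrow> finite (cliques A)"
  unfolding cliques_def wf_graph_def by (rule finite_subset[of _ "Pow (fst A)"]) auto

lemma finite_clique: "wf_graph A \<Longrightarrow> c \<in> cliques A \<Longrightarrow> finite c"
  unfolding cliques_def wf_graph_def by (auto intro: finite_subset)

lemma sphere_eq_link: "sphere A x = link A {x}"
  unfolding sphere_def link_def by simp

lemma fst_link: "fst (link A s) = {y \<in> fst A. \<forall>x\<in>s. (x, y) \<in> snd A}"
  unfolding link_def induced_def by auto

lemma snd_link: "snd (link A s) = snd A \<inter> (fst (link A s) \<times> fst (link A s))"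
  unfolding link_def induced_def by auto

lemma sphere_link: "y \<in> fst (link A s) \<Longrightarrow> sphere (link A s) y = link A (insert y s)"
  unfolding link_def sphere_def induced_def by auto

lemma cliques_induced: "cliques (induced A W) = {c \<in> cliques A. c \<subseteq> W}"
  unfolding cliques_def induced_def by auto

lemma cliques_delete_vertex: "cliques (delete_vertex A x) = {c \<in> cliques A. x \<notin> c}"
  unfolding cliques_def delete_vertex_def induced_def by auto

lemma cliques_link:
  assumes wf: "wf_graph A" and s: "s \<in> cliques A"
  shows "cliques (link A s) = (\<lambda>c. c - s) ` {c \<in> cliques A. s \<subset> c}"
proof (intro equalityI subsetI)
  fix d assume d: "d \<in> cliques (link A s)"
  have dV: "d \<subseteq> fst A" and "d \<noteq> {}"
    and d_adj_s: "\<And>y x. y \<in> d \<Longrightarrow> x \<in> s \<Longrightarrow> (x, y) \<in> snd A"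
    and d_clique: "\<And>x y. x \<in> d \<Longrightarrow> y \<in> d \<Longrightarrow> x \<noteq> y \<Longrightarrow> (x, y) \<in> snd A"
    using d unfolding cliques_def fst_link snd_link by auto
  have sym: "\<And>x y. (x, y) \<in> snd A \<Longrightarrow> (y, x) \<in> snd A" and irrefl: "\<And>x. (x, x) \<notin> snd A"
    using wf unfolding wf_graph_def by blast+
  have disj: "d \<inter> s = {}" using d_adj_s irrefl by blast
  have "d \<union> s \<in> cliques A"
    using s dV d_adj_s d_clique sym unfolding cliques_def by auto
  moreover have "s \<subset> d \<union> s" and "d = (d \<union> s) - s" using disj \<open>d \<noteq> {}\<close> by auto
  ultimately show "d \<in> (\<lambda>c. c - s) ` {c \<in> cliques A. s \<subset> c}" by blast
next
  fix d assume "d \<in> (\<lambda>c. c - s) ` {c \<in> cliques A. s \<subset> c}"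
  then obtain c where c: "c \<in> cliques A" "s \<subset> c" and dc: "d = c - s" by blast
  have c_clique: "\<And>x y. x \<in> c \<Longrightarrow> y \<in> c \<Longrightarrow> x \<noteq> y \<Longrightarrow> (x, y) \<in> snd A"
    and "c \<subseteq> fst A" using c unfolding cliques_def by auto
  have "c - s \<subseteq> fst (link A s)"
    unfolding fst_link using c(2) c_clique \<open>c \<subseteq> fst A\<close> by blast
  moreover have "c - s \<noteq> {}" using c(2) by auto
  ultimately show "d \<in> cliques (link A s)"
    unfolding dc cliques_def snd_link using c_clique by blast
qed

lemma clique_count_link:
  assumes "wf_graph A" and "s \<in> cliques A"
  shows "clique_count (link A s) = card {c \<in> cliques A. s \<subset> c}"
proof -
  have "inj_on (\<lambda>c. c - s) {c \<in> cliques A. s \<subset> c}"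
    by (rule inj_onI) blast
  then show ?thesis unfolding clique_count_def cliques_link[OF assms] by (rule card_image)
qed

lemma clique_count_delete_vertex:
  assumes wf: "wf_graph A" and x: "x \<in> fst A"
  shows "clique_count A = clique_count (delete_vertex A x) + 1 + clique_count (sphere A x)"
proof -
  have xc: "{x} \<in> cliques A" using x unfolding cliques_def by auto
  have f: "finite (cliques A)" using finite_cliques[OF wf] .
  have split: "cliques A = ({c \<in> cliques A. x \<notin> c} \<union> {{x}}) \<union> {c \<in> cliques A. {x} \<subset> c}"
    using xc by auto
  have "card (cliques A)
      = card ({c \<in> cliques A. x \<notin> c} \<union> {{x}}) + card {c \<in> cliques A. {x} \<subset> c}"
    by (subst split, rule card_Un_disjoint) (use f in auto)
  also have "card ({c \<in> cliques A. x \<notin> c} \<union> {{x}}) = card {c \<in> cliques A. x \<notin> c} + 1"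
    using f by (simp add: card_Un_disjoint)
  finally show ?thesis
    unfolding clique_count_def sphere_eq_link
      clique_count_link[OF wf xc, unfolded clique_count_def] cliques_delete_vertex by simp
qed

lemma clique_count_edgeless:
  assumes "snd A = {}"
  shows "clique_count A = card (fst A)"
proof -
  have "cliques A = (\<lambda>v. {v}) ` fst A"
  proof (intro equalityI subsetI)
    fix c assume "c \<in> cliques A"
    then have c: "c \<subseteq> fst A" "c \<noteq> {}" "\<forall>x\<in>c. \<forall>y\<in>c. x = y"
      using assms unfolding cliques_def by auto
    then obtain v where "v \<in> c" by blast
    then have "c = {v}" using c(3) by blast
    then show "c \<in> (\<lambda>v. {v}) ` fst A" using c(1) by blast
  qed (auto simp: cliques_def)
  then show ?thesis unfolding clique_count_def by (simp add: card_image)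
qed

lemma contractible_odd_clique_count: "contractible A \<Longrightarrow> odd (clique_count A)"
proof (induction rule: contractible.induct)
  case (K1 v)
  then show ?case by (simp add: clique_count_edgeless)
next
  case (step G x)
  then show ?case using clique_count_delete_vertex[OF step(1,2)] by simp
qed

text \<open>Counting pairs (s, c) of cliques with s \<subset> c and card s = k.\<close>

lemma sum_clique_count_link:
  assumes wf: "wf_graph A" and k: "k \<ge> 1"
  shows "(\<Sum>s\<in>{s \<in> cliques A. card s = k}. clique_count (link A s))
       = (\<Sum>c\<in>cliques A. if k < card c then card c choose k else 0)"
proof -
  let ?P = "{s \<in> cliques A. card s = k}"
  have f: "finite (cliques A)" using finite_cliques[OF wf] .
  have "(\<Sum>s\<in>?P. clique_count (link A s)) = (\<Sum>s\<in>?P. card {c \<in> cliques A. s \<subset> c})"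
    by (rule sum.cong) (auto simp: clique_count_link[OF wf])
  also have "\<dots> = (\<Sum>s\<in>?P. \<Sum>c\<in>cliques A. if s \<subset> c then 1 else 0)"
    by (rule sum.cong) (use f in \<open>auto simp: sum.If_cases Int_def\<close>)
  also have "\<dots> = (\<Sum>c\<in>cliques A. \<Sum>s\<in>?P. if s \<subset> c then 1 else 0)"
    by (rule sum.swap)
  also have "\<dots> = (\<Sum>c\<in>cliques A. card {s \<in> ?P. s \<subset> c})"
    by (rule sum.cong) (use f in \<open>auto simp: sum.If_cases Int_def\<close>)
  also have "\<dots> = (\<Sum>c\<in>cliques A. if k < card c then card c choose k else 0)"
  proof (rule sum.cong)
    fix c assume c: "c \<in> cliques A"
    have fc: "finite c" using finite_clique[OF wf c] .
    show "card {s \<in> ?P. s \<subset> c} = (if k < card c then card c choose k else 0)"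
    proof (cases "k < card c")
      case True
      have "s \<in> cliques A" if "s \<subseteq> c" "card s = k" for s
        using c k that unfolding cliques_def by auto
      then have "{s \<in> ?P. s \<subset> c} = {s. s \<subseteq> c \<and> card s = k}"
        using True by auto
      then show ?thesis using True n_subsets[OF fc] by simp
    next
      case False
      then have "{s \<in> ?P. s \<subset> c} = {}" using psubset_card_mono[OF fc] by auto
      then show ?thesis using False by (simp only: card.empty if_False)
    qed
  qed simp
  finally show ?thesis .
qed

lemma geoG_0: "geoG 0 A \<longleftrightarrow> wf_graph A \<and> snd A = {}"
  by (simp add: geoG_def)

lemma geoS_0: "geoS 0 A \<longleftrightarrow> wf_graph A \<and> snd A = {} \<and> card (fst A) = 2"
  by (simp add: geoS_def)

lemma geoB_0: "geoB 0 A \<longleftrightarrow> wf_graph A \<and> snd A = {} \<and> card (fst A) = 1"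
  by (simp add: geoB_def)

lemma geoG_Suc: "geoG (Suc d) A \<longleftrightarrow> wf_graph A
    \<and> (\<forall>x\<in>fst A. geoS d (sphere A x) \<or> geoB d (sphere A x)) \<and> interior_set (geoS d) A \<noteq> {}"
  by (simp add: geoG_def geoS_def geoB_def geo_step_def Let_def)

lemma geoB_Suc: "geoB (Suc d) A \<longleftrightarrow> contractible A \<and> geoG (Suc d) A \<and> geoS d (boundary_of (geoB d) A)"
  by (simp add: geoG_def geoS_def geoB_def geo_step_def Let_def)

lemma geoS_Suc: "geoS (Suc d) A \<longleftrightarrow>
    \<not> contractible A \<and> geoG (Suc d) A \<and> (\<forall>x\<in>fst A. geoB (Suc d) (delete_vertex A x))"
  by (simp add: geoG_def geoS_def geoB_def geo_step_def Let_def)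

lemma geoS_imp_geoG: "geoS d A \<Longrightarrow> geoG d A"
  by (cases d) (auto simp: geoS_0 geoG_0 geoS_Suc)

lemma geoB_imp_geoG: "geoB d A \<Longrightarrow> geoG d A"
  by (cases d) (auto simp: geoB_0 geoG_0 geoB_Suc)

lemma geoG_imp_wf_graph: "geoG d A \<Longrightarrow> wf_graph A"
  by (cases d) (auto simp: geoG_0 geoG_Suc)

lemma geoG_sphere: "geoG (Suc d) A \<Longrightarrow> x \<in> fst A \<Longrightarrow> geoS d (sphere A x) \<or> geoB d (sphere A x)"
  by (simp add: geoG_Suc)

lemma geoG_Suc_sphere: "geoG (Suc d) A \<Longrightarrow> x \<in> fst A \<Longrightarrow> geoG d (sphere A x)"
  using geoG_sphere geoS_imp_geoG geoB_imp_geoG by metis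

lemma geoS_Suc_nonempty: "geoS (Suc d) A \<Longrightarrow> fst A \<noteq> {}"
  by (auto simp: geoS_Suc geoG_Suc interior_set_def)

lemma geoB_odd_clique_count: "geoB d A \<Longrightarrow> odd (clique_count A)"
  by (cases d) (auto simp: geoB_0 geoB_Suc clique_count_edgeless contractible_odd_clique_count)

lemma geoS_even_clique_count: "geoS d A \<Longrightarrow> even (clique_count A)"
proof (induction d arbitrary: A)
  case 0
  then show ?case by (simp add: geoS_0 clique_count_edgeless)
next
  case (Suc d)
  then obtain x where x: "x \<in> fst A" "geoS d (sphere A x)"
    by (auto simp: geoS_Suc geoG_Suc interior_set_def)
  have "geoB (Suc d) (delete_vertex A x)" using Suc.prems x(1) by (simp add: geoS_Suc)
  then have "odd (clique_count (delete_vertex A x))" by (rule geoB_odd_clique_count)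
  moreover have "even (clique_count (sphere A x))" using Suc.IH x(2) .
  moreover have "wf_graph A" using Suc.prems geoS_imp_geoG geoG_imp_wf_graph by blast
  ultimately show ?case using clique_count_delete_vertex[OF _ x(1)] by simp
qed

lemma geoS_sphere_not_geoB:
  assumes S: "geoS (Suc d) A" and x: "x \<in> fst A"
  shows "\<not> geoB d (sphere A x)"
proof
  assume "geoB d (sphere A x)"
  then have "odd (clique_count (sphere A x))" by (rule geoB_odd_clique_count)
  moreover have "geoB (Suc d) (delete_vertex A x)" using S x by (simp add: geoS_Suc)
  then have "odd (clique_count (delete_vertex A x))" by (rule geoB_odd_clique_count)
  moreover have "wf_graph A" using S geoS_imp_geoG geoG_imp_wf_graph by blast
  ultimately have "odd (clique_count A)" using clique_count_delete_vertex[OF _ x] by simp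
  then show False using geoS_even_clique_count[OF S] by simp
qed

lemma geoB_if_geoB_sphere:
  assumes "geoS (Suc d) A \<or> geoB (Suc d) A" and "x \<in> fst A" and "geoB d (sphere A x)"
  shows "geoB (Suc d) A"
  using assms geoS_sphere_not_geoB by metis

lemma clique_card_le: "geoG d A \<Longrightarrow> c \<in> cliques A \<Longrightarrow> card c \<le> Suc d"
proof (induction d arbitrary: A c)
  case 0
  then have "snd A = {}" by (simp add: geoG_0)
  then have "\<forall>x\<in>c. \<forall>y\<in>c. x = y" and "c \<noteq> {}" using 0(2) unfolding cliques_def by auto
  then obtain v where "c = {v}" by blast
  then show ?case by simp
next
  case (Suc d)
  have wf: "wf_graph A" using Suc.prems(1) geoG_imp_wf_graph by blast
  obtain x where x: "x \<in> c" using Suc.prems(2) unfolding cliques_def by auto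
  show ?case
  proof (cases "c = {x}")
    case True then show ?thesis by simp
  next
    case False
    have xV: "x \<in> fst A" and xc: "{x} \<in> cliques A"
      using x Suc.prems(2) unfolding cliques_def by auto
    have "c \<in> {c' \<in> cliques A. {x} \<subset> c'}" using Suc.prems(2) False x by auto
    then have "c - {x} \<in> cliques (sphere A x)"
      unfolding sphere_eq_link cliques_link[OF wf xc] by (rule imageI)
    then have "card (c - {x}) \<le> Suc d"
      using Suc.IH geoG_Suc_sphere[OF Suc.prems(1) xV] by blast
    then show ?thesis using card.remove[OF finite_clique[OF wf Suc.prems(2)] x] by simp
  qed
qed

lemma fst_boundary_of: "fst (boundary_of P H) = {x \<in> fst H. P (sphere H x)}"
  unfolding boundary_of_def induced_def by auto

lemma snd_boundary_of: "snd (boundary_of P H) = Restr (snd H) (fst (boundary_of P H))"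
  unfolding boundary_of_def induced_def by auto

lemma wf_graph_edge_vertices: "wf_graph H \<Longrightarrow> (v, w) \<in> snd H \<Longrightarrow> v \<in> fst H \<and> w \<in> fst H"
  unfolding wf_graph_def by auto

lemma wf_graph_edge_sym: "wf_graph H \<Longrightarrow> (v, w) \<in> snd H \<Longrightarrow> (w, v) \<in> snd H"
  unfolding wf_graph_def by auto

lemma sphere_sphere_eq_link:
  assumes "wf_graph H" and "(v, w) \<in> snd H"
  shows "sphere (sphere H v) w = link H {v, w}"
proof -
  have "w \<in> fst (link H {v})" using assms by (auto simp: fst_link dest: wf_graph_edge_vertices)
  then show ?thesis unfolding sphere_eq_link[of H v] by (simp add: sphere_link insert_commute)
qed

lemma geoG_link_edge:
  assumes H: "geoG (Suc (Suc d)) H" and vw: "(v, w) \<in> snd H"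
  shows "geoS d (link H {v, w}) \<or> geoB d (link H {v, w})"
proof -
  have wf: "wf_graph H" using H geoG_imp_wf_graph by blast
  have "geoG (Suc d) (sphere H v)" using geoG_Suc_sphere[OF H] wf_graph_edge_vertices[OF wf vw] by blast
  moreover have "w \<in> fst (sphere H v)"
    using vw wf_graph_edge_vertices[OF wf vw] by (simp add: sphere_eq_link fst_link)
  ultimately show ?thesis using geoG_sphere sphere_sphere_eq_link[OF wf vw] by metis
qed

lemma geoB_sphere_if_geoB_link_edge:
  assumes H: "geoG (Suc (Suc d)) H" and vw: "(v, w) \<in> snd H" and "geoB d (link H {v, w})"
  shows "geoB (Suc d) (sphere H v)"
proof (rule geoB_if_geoB_sphere)
  have wf: "wf_graph H" using H geoG_imp_wf_graph by blast
  show "geoS (Suc d) (sphere H v) \<or> geoB (Suc d) (sphere H v)"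
    using geoG_sphere[OF H] wf_graph_edge_vertices[OF wf vw] by blast
  show "w \<in> fst (sphere H v)"
    using vw wf_graph_edge_vertices[OF wf vw] by (simp add: sphere_eq_link fst_link)
  show "geoB d (sphere (sphere H v) w)"
    using assms(3) sphere_sphere_eq_link[OF wf vw] by simp
qed

lemma geoB_link_edge_if_geoB_link_triangle:
  assumes H: "geoG (Suc (Suc (Suc d))) H"
    and vx: "(v, x) \<in> snd H" and vy: "(v, y) \<in> snd H" and xy: "(x, y) \<in> snd H"
    and "geoB d (link H {v, x, y})"
  shows "geoB (Suc d) (link H {v, x})"
proof (rule geoB_if_geoB_sphere)
  show "geoS (Suc d) (link H {v, x}) \<or> geoB (Suc d) (link H {v, x})"
    using geoG_link_edge[OF H vx] .
  have wf: "wf_graph H" using H geoG_imp_wf_graph by blast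
  show y: "y \<in> fst (link H {v, x})"
    using vy xy wf_graph_edge_vertices[OF wf vy] by (simp add: fst_link)
  show "geoB d (sphere (link H {v, x}) y)"
    using assms(5) by (simp add: sphere_link[OF y] insert_commute)
qed

lemma fst_geo_boundary_3: "fst (geo_boundary 3 H) = {x \<in> fst H. geoB 2 (sphere H x)}"
  by (simp add: geo_boundary_def fst_boundary_of)

lemma snd_geo_boundary_3: "snd (geo_boundary 3 H) = Restr (snd H) (fst (geo_boundary 3 H))"
  by (simp add: geo_boundary_def snd_boundary_of)

text \<open>The two end points y of the path link H {v, x} span triangles {v, x, y}, and the link of
  the edge {v, y} is again a ball.\<close>

lemma two_le_card_boundary_edges_around:
  assumes H: "geoG 3 H" and vx: "(v, x) \<in> snd H" and K: "geoB 1 (link H {v, x})"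
  shows "2 \<le> card {y. (v, y) \<in> snd H \<and> (x, y) \<in> snd H \<and> geoB 1 (link H {v, y})}"
proof -
  have H3: "geoG (Suc (Suc (Suc 0))) H" using H by (simp add: numeral_3_eq_3)
  have wf: "wf_graph H" using H geoG_imp_wf_graph by blast
  define Y where "Y = fst (boundary_of (geoB 0) (link H {v, x}))"
  have "geoS 0 (boundary_of (geoB 0) (link H {v, x}))"
    using K by (simp add: geoB_Suc)
  then have card_Y: "card Y = 2" unfolding Y_def by (simp add: geoS_0)
  let ?E = "{y. (v, y) \<in> snd H \<and> (x, y) \<in> snd H \<and> geoB 1 (link H {v, y})}"
  have "Y \<subseteq> ?E"
  proof
    fix y assume "y \<in> Y"
    then have y: "y \<in> fst (link H {v, x})" and "geoB 0 (sphere (link H {v, x}) y)"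
      unfolding Y_def fst_boundary_of by auto
    then have "geoB 0 (link H {v, y, x})" by (simp add: sphere_link[OF y] insert_commute)
    moreover have vy: "(v, y) \<in> snd H" and xy: "(x, y) \<in> snd H" using y by (auto simp: fst_link)
    ultimately have "geoB (Suc 0) (link H {v, y})"
      using geoB_link_edge_if_geoB_link_triangle[OF H3 vy vx wf_graph_edge_sym[OF wf xy]] by simp
    then show "y \<in> ?E" using vy xy by simp
  qed
  moreover have "finite ?E"
  proof (rule finite_subset)
    show "finite (fst H)" using wf by (simp add: wf_graph_def)
    show "?E \<subseteq> fst H" using wf_graph_edge_vertices[OF wf] by blast
  qed
  ultimately have "card Y \<le> card ?E" by (simp add: card_mono)
  then show ?thesis using card_Y by simp
qed

definition two_regular :: "'a graph \<Rightarrow> bool" where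
  "two_regular T \<longleftrightarrow> (\<forall>a\<in>fst T. card {b \<in> fst T. (a, b) \<in> snd T} = 2)"

definition graph_connected :: "'a graph \<Rightarrow> bool" where
  "graph_connected T \<longleftrightarrow> (\<forall>X. X \<subseteq> fst T \<longrightarrow> X \<noteq> {}
     \<longrightarrow> (\<forall>a\<in>X. \<forall>b\<in>fst T. (a, b) \<in> snd T \<longrightarrow> b \<in> X) \<longrightarrow> X = fst T)"

text \<open>The neighbours x of v with a ball as link of {v, x} are the boundary circle of the ball S(v).
  They lie on the circle S(v) of the boundary graph and are closed under adjacency there, so they
  exhaust it.\<close>

lemma geoB_link_boundary_edge:
  assumes H: "geoG 3 H"
    and circles: "\<And>u. u \<in> fst (geo_boundary 3 H) \<Longrightarrow>
       two_regular (sphere (geo_boundary 3 H) u) \<and> graph_connected (sphere (geo_boundary 3 H) u)"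
    and v: "v \<in> fst (geo_boundary 3 H)" and w: "w \<in> fst (geo_boundary 3 H)" and vw: "(v, w) \<in> snd H"
  shows "geoB 1 (link H {v, w})"
proof -
  have H3: "geoG (Suc (Suc (Suc 0))) H" using H by (simp add: numeral_3_eq_3)
  have wf: "wf_graph H" using H geoG_imp_wf_graph by blast
  define T where "T = sphere (geo_boundary 3 H) v"
  define X where "X = {x. (v, x) \<in> snd H \<and> geoB 1 (link H {v, x})}"
  have fst_T: "fst T = {y \<in> fst (geo_boundary 3 H). (v, y) \<in> snd H}"
    unfolding T_def sphere_def induced_def snd_geo_boundary_3 using v by auto
  have snd_T: "snd T = Restr (snd H) (fst T)"
    unfolding T_def sphere_def induced_def snd_geo_boundary_3 by auto
  have in_boundary: "x \<in> fst (geo_boundary 3 H)" if "(v, x) \<in> snd H" "geoB 1 (link H {v, x})" for x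
    using geoB_sphere_if_geoB_link_edge[OF H3 wf_graph_edge_sym[OF wf that(1)]] that(2)
      wf_graph_edge_vertices[OF wf that(1)]
    unfolding fst_geo_boundary_3 by (simp add: numeral_2_eq_2 insert_commute)
  have X_T: "X \<subseteq> fst T" unfolding X_def fst_T using in_boundary by auto
  have "X \<noteq> {}"
  proof -
    have "geoB 2 (sphere H v)" using v by (simp add: fst_geo_boundary_3)
    then have "geoS (Suc 0) (boundary_of (geoB 1) (sphere H v))" by (simp add: numeral_2_eq_2 geoB_Suc)
    then have "fst (boundary_of (geoB 1) (sphere H v)) \<noteq> {}" by (rule geoS_Suc_nonempty)
    then obtain x where "x \<in> fst (sphere H v)" and "geoB 1 (sphere (sphere H v) x)"
      by (auto simp: fst_boundary_of)
    then show ?thesis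
      unfolding X_def using sphere_sphere_eq_link[OF wf] by (auto simp: sphere_eq_link fst_link)
  qed
  moreover have "b \<in> X" if x: "x \<in> X" and b: "b \<in> fst T" and xb: "(x, b) \<in> snd T" for x b
  proof -
    let ?N = "{y \<in> fst T. (x, y) \<in> snd T}"
    let ?Y = "{y. (v, y) \<in> snd H \<and> (x, y) \<in> snd H \<and> geoB 1 (link H {v, y})}"
    have "two_regular T" using circles v unfolding T_def by blast
    then have card_N: "card ?N = 2" using x X_T unfolding two_regular_def by blast
    then have fin_N: "finite ?N" by (simp add: card_ge_0_finite)
    have Y_N: "?Y \<subseteq> ?N" using X_T x unfolding X_def snd_T by auto
    have "2 \<le> card ?Y" using two_le_card_boundary_edges_around[OF H] x unfolding X_def by blast
    with card_N card_mono[OF fin_N Y_N] have "card ?Y = card ?N" by simp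
    then have "?Y = ?N" by (rule card_subset_eq[OF fin_N Y_N])
    then show ?thesis using b xb unfolding X_def by auto
  qed
  moreover have "graph_connected T" using circles v unfolding T_def by blast
  ultimately have "X = fst T" using X_T unfolding graph_connected_def by blast
  then show ?thesis using w vw unfolding X_def fst_T by auto
qed

lemma even_sum_clique_count_vertex_edge_links:
  assumes wf: "wf_graph A" and small: "\<And>c. c \<in> cliques A \<Longrightarrow> card c \<le> 4"
  shows "even ((\<Sum>s\<in>{s \<in> cliques A. card s = 1}. clique_count (link A s))
             + (\<Sum>s\<in>{s \<in> cliques A. card s = 2}. clique_count (link A s)))"
proof -
  have "(\<Sum>s\<in>{s \<in> cliques A. card s = 1}. clique_count (link A s))
      + (\<Sum>s\<in>{s \<in> cliques A. card s = 2}. clique_count (link A s))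
      = (\<Sum>c\<in>cliques A. (if 1 < card c then card c else 0)
                        + (if 2 < card c then card c choose 2 else 0))"
    using sum_clique_count_link[OF wf, of 1] sum_clique_count_link[OF wf, of 2]
    by (simp only: sum.distrib choose_one)
  moreover have "even ((if 1 < card c then card c else 0)
                      + (if 2 < card c then card c choose 2 else 0))" if "c \<in> cliques A" for c
  proof -
    have "0 < card c"
      using finite_clique[OF wf that] that unfolding cliques_def by (simp add: card_gt_0_iff)
    with small[OF that] have "card c = 1 \<or> card c = 2 \<or> card c = 3 \<or> card c = 4" by linarith
    moreover have "(3::nat) choose 2 = 3" "(4::nat) choose 2 = 6" by (simp_all add: numeral_eq_Suc)
    ultimately show ?thesis by auto
  qed
  ultimately show ?thesis by (simp add: dvd_sum)
qed

lemma odd_clique_count_sphere_iff: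
  assumes H: "geoG (Suc d) H" and x: "x \<in> fst H"
  shows "odd (clique_count (sphere H x)) \<longleftrightarrow> geoB d (sphere H x)"
  using geoG_sphere[OF H x] geoS_even_clique_count geoB_odd_clique_count by blast

lemma geoB_link_edge_iff:
  assumes H: "geoG 3 H"
    and circles: "\<And>u. u \<in> fst (geo_boundary 3 H) \<Longrightarrow>
       two_regular (sphere (geo_boundary 3 H) u) \<and> graph_connected (sphere (geo_boundary 3 H) u)"
    and vw: "(v, w) \<in> snd H"
  shows "geoB 1 (link H {v, w}) \<longleftrightarrow> v \<in> fst (geo_boundary 3 H) \<and> w \<in> fst (geo_boundary 3 H)"
proof
  have H3: "geoG (Suc (Suc (Suc 0))) H" using H by (simp add: numeral_3_eq_3)
  have wf: "wf_graph H" using H geoG_imp_wf_graph by blast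
  assume "geoB 1 (link H {v, w})"
  then have "geoB (Suc (Suc 0)) (sphere H v)" and "geoB (Suc (Suc 0)) (sphere H w)"
    using geoB_sphere_if_geoB_link_edge[OF H3 vw] geoB_sphere_if_geoB_link_edge[OF H3 wf_graph_edge_sym[OF wf vw]]
    by (simp_all add: insert_commute)
  then show "v \<in> fst (geo_boundary 3 H) \<and> w \<in> fst (geo_boundary 3 H)"
    using wf_graph_edge_vertices[OF wf vw] by (simp add: fst_geo_boundary_3 numeral_2_eq_2)
next
  assume "v \<in> fst (geo_boundary 3 H) \<and> w \<in> fst (geo_boundary 3 H)"
  then show "geoB 1 (link H {v, w})" using geoB_link_boundary_edge[OF H circles] vw by blast
qed

lemma even_card_boundary_vertices_edges:
  assumes H: "geoG 3 H"
    and circles: "\<And>u. u \<in> fst (geo_boundary 3 H) \<Longrightarrow>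
       two_regular (sphere (geo_boundary 3 H) u) \<and> graph_connected (sphere (geo_boundary 3 H) u)"
  shows "even (card (fst (geo_boundary 3 H)) + card {c \<in> cliques (geo_boundary 3 H). card c = 2})"
proof -
  let ?D = "geo_boundary 3 H"
  let ?P1 = "{s \<in> cliques H. card s = 1}" and ?P2 = "{s \<in> cliques H. card s = 2}"
  let ?f = "\<lambda>s. clique_count (link H s)"
  have wf: "wf_graph H" using H geoG_imp_wf_graph by blast
  have finite: "finite ?P1" "finite ?P2" using finite_cliques[OF wf] by auto
  have "{s \<in> ?P1. odd (?f s)} = (\<lambda>x. {x}) ` fst ?D"
  proof -
    have "odd (?f {x}) \<longleftrightarrow> x \<in> fst ?D" if "x \<in> fst H" for x
      using odd_clique_count_sphere_iff[of 2 H x] H that by (simp add: sphere_eq_link fst_geo_boundary_3)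
    then show ?thesis
      unfolding cliques_def by (auto simp: card_1_singleton_iff fst_geo_boundary_3)
  qed
  then have "card {s \<in> ?P1. odd (?f s)} = card (fst ?D)"
    by (simp add: card_image)
  moreover have "{s \<in> ?P2. odd (?f s)} = {c \<in> cliques ?D. card c = 2}"
  proof -
    have odd_iff: "odd (?f s) \<longleftrightarrow> s \<subseteq> fst ?D" if P2: "s \<in> ?P2" for s
    proof -
      obtain v w where s: "s = {v, w}" and "v \<noteq> w" using P2 by (auto simp: card_2_iff)
      then have vw: "(v, w) \<in> snd H" using P2 unfolding cliques_def by auto
      have "geoS 1 (link H {v, w}) \<or> geoB 1 (link H {v, w})"
        using H vw geoG_link_edge[of 1 H v w] by (simp add: numeral_3_eq_3)
      then have "odd (?f s) \<longleftrightarrow> geoB 1 (link H {v, w})"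
        unfolding s using geoS_even_clique_count geoB_odd_clique_count by metis
      then show ?thesis using geoB_link_edge_iff[OF H circles vw] s by simp
    qed
    moreover have "cliques ?D = {c \<in> cliques H. c \<subseteq> fst ?D}"
      unfolding fst_geo_boundary_3 by (simp add: geo_boundary_def boundary_of_def cliques_induced)
    ultimately show ?thesis by auto
  qed
  moreover have "even (sum ?f ?P1 + sum ?f ?P2)"
    using even_sum_clique_count_vertex_edge_links[OF wf] clique_card_le[OF H] by simp
  ultimately show ?thesis
    using even_sum_iff[OF finite(1), of ?f] even_sum_iff[OF finite(2), of ?f] by auto
qed

lemma cycle_graph_pred:
  fixes a b n :: nat
  assumes "a < n" "b < n"
  shows "a = (b + 1) mod n \<longleftrightarrow> b = (a + n - 1) mod n"
  using assms by (cases "a = 0"; cases "b + 1 = n") (auto simp: mod_if)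

lemma two_regular_cycle_graph:
  assumes n: "3 \<le> n"
  shows "two_regular (cycle_graph n)"
  unfolding two_regular_def
proof
  fix a assume "a \<in> fst (cycle_graph n)"
  then have a: "a < n" by (simp add: cycle_graph_def)
  have "{b \<in> fst (cycle_graph n). (a, b) \<in> snd (cycle_graph n)} = {(a + 1) mod n, (a + n - 1) mod n}"
    using a n cycle_graph_pred[OF a] by (auto simp: cycle_graph_def)
  moreover have "(a + 1) mod n \<noteq> (a + n - 1) mod n"
    using a n by (cases "a = 0"; cases "a + 1 = n") (auto simp: mod_if)
  ultimately show "card {b \<in> fst (cycle_graph n). (a, b) \<in> snd (cycle_graph n)} = 2" by simp
qed

lemma graph_connected_cycle_graph: "graph_connected (cycle_graph n)"
  unfolding graph_connected_def
proof (intro allI impI)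
  fix X assume X: "X \<subseteq> fst (cycle_graph n)" "X \<noteq> {}"
    and closed: "\<forall>a\<in>X. \<forall>b\<in>fst (cycle_graph n). (a, b) \<in> snd (cycle_graph n) \<longrightarrow> b \<in> X"
  obtain i where i: "i \<in> X" using X by auto
  then have i_n: "i < n" using X by (auto simp: cycle_graph_def)
  have walk: "(i + k) mod n \<in> X" for k
  proof (induction k)
    case 0 then show ?case using i i_n by simp
  next
    case (Suc k)
    have "(i + Suc k) mod n = ((i + k) mod n + 1) mod n" by (simp add: mod_Suc_eq)
    then show ?case using closed Suc.IH i_n by (auto simp: cycle_graph_def)
  qed
  show "X = fst (cycle_graph n)"
  proof (intro equalityI subsetI)
    fix j assume "j \<in> fst (cycle_graph n)"
    then have "(i + (j + n - i)) mod n = j" using i_n by (simp add: cycle_graph_def)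
    then show "j \<in> X" using walk[of "j + n - i"] by simp
  qed (use X in auto)
qed

definition graph_iso_by :: "('a \<Rightarrow> 'b) \<Rightarrow> 'a graph \<Rightarrow> 'b graph \<Rightarrow> bool" where
  "graph_iso_by f A C \<longleftrightarrow> bij_betw f (fst A) (fst C) \<and>
     (\<forall>x\<in>fst A. \<forall>y\<in>fst A. (x, y) \<in> snd A \<longleftrightarrow> (f x, f y) \<in> snd C)"

lemma graph_iso_iff_graph_iso_by: "graph_iso A C \<longleftrightarrow> (\<exists>f. graph_iso_by f A C)"
  unfolding graph_iso_def graph_iso_by_def by blast

lemma graph_iso_by_neighbours:
  assumes iso: "graph_iso_by f A C" and a: "a \<in> fst A"
  shows "f ` {b \<in> fst A. (a, b) \<in> snd A} = {b \<in> fst C. (f a, b) \<in> snd C}"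
proof -
  have bij: "bij_betw f (fst A) (fst C)"
    and adj: "\<And>x y. x \<in> fst A \<Longrightarrow> y \<in> fst A \<Longrightarrow> (x, y) \<in> snd A \<longleftrightarrow> (f x, f y) \<in> snd C"
    using iso unfolding graph_iso_by_def by auto
  show ?thesis
  proof (intro equalityI subsetI)
    fix z assume "z \<in> f ` {b \<in> fst A. (a, b) \<in> snd A}"
    then show "z \<in> {b \<in> fst C. (f a, b) \<in> snd C}" using adj[OF a] bij bij_betwE by blast
  next
    fix z assume z: "z \<in> {b \<in> fst C. (f a, b) \<in> snd C}"
    then obtain y where "y \<in> fst A" "z = f y" using bij unfolding bij_betw_def by auto
    then show "z \<in> f ` {b \<in> fst A. (a, b) \<in> snd A}" using adj[OF a] z by auto
  qed
qed

lemma snd_sphere: "snd (sphere G w) = Restr (snd G) (fst (sphere G w))"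
  unfolding sphere_def induced_def by auto

lemma graph_iso_by_sphere:
  assumes iso: "graph_iso_by f A C" and v: "v \<in> fst A"
  shows "graph_iso_by f (sphere A v) (sphere C (f v))"
proof -
  have bij: "bij_betw f (fst A) (fst C)"
    and adj: "\<And>x y. x \<in> fst A \<Longrightarrow> y \<in> fst A \<Longrightarrow> (x, y) \<in> snd A \<longleftrightarrow> (f x, f y) \<in> snd C"
    using iso unfolding graph_iso_by_def by auto
  have fst_A: "fst (sphere A v) = {y \<in> fst A. (v, y) \<in> snd A}"
    and fst_C: "fst (sphere C (f v)) = {z \<in> fst C. (f v, z) \<in> snd C}"
    unfolding sphere_def induced_def by auto
  have img: "f ` fst (sphere A v) = fst (sphere C (f v))"
    unfolding fst_A fst_C by (rule graph_iso_by_neighbours[OF iso v])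
  have "bij_betw f (fst (sphere A v)) (fst (sphere C (f v)))"
    unfolding bij_betw_def img using bij unfolding bij_betw_def fst_A by (auto intro: inj_on_subset)
  moreover have "\<forall>x\<in>fst (sphere A v). \<forall>y\<in>fst (sphere A v).
      (x, y) \<in> snd (sphere A v) \<longleftrightarrow> (f x, f y) \<in> snd (sphere C (f v))"
  proof (intro ballI)
    fix x y assume x: "x \<in> fst (sphere A v)" and y: "y \<in> fst (sphere A v)"
    then have "f x \<in> fst (sphere C (f v))" "f y \<in> fst (sphere C (f v))" using img by auto
    moreover have "x \<in> fst A" "y \<in> fst A" using x y fst_A by auto
    ultimately show "(x, y) \<in> snd (sphere A v) \<longleftrightarrow> (f x, f y) \<in> snd (sphere C (f v))"
      unfolding snd_sphere[of A] snd_sphere[of C] using x y adj by auto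
  qed
  ultimately show ?thesis unfolding graph_iso_by_def by blast
qed

lemma two_regular_graph_iso_by:
  assumes iso: "graph_iso_by f A C" and "two_regular C"
  shows "two_regular A"
  unfolding two_regular_def
proof
  fix a assume a: "a \<in> fst A"
  have inj: "inj_on f (fst A)" using iso unfolding graph_iso_by_def bij_betw_def by auto
  have "card {b \<in> fst A. (a, b) \<in> snd A} = card {b \<in> fst C. (f a, b) \<in> snd C}"
    using card_image[OF inj_on_subset[OF inj]] graph_iso_by_neighbours[OF iso a]
    by (metis (no_types, lifting) mem_Collect_eq subsetI)
  moreover have "f a \<in> fst C" using iso a unfolding graph_iso_by_def using bij_betwE by blast
  ultimately show "card {b \<in> fst A. (a, b) \<in> snd A} = 2"
    using assms(2) unfolding two_regular_def by simp
qed

lemma graph_connected_graph_iso_by: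
  assumes iso: "graph_iso_by f A C" and conn: "graph_connected C"
  shows "graph_connected A"
  unfolding graph_connected_def
proof (intro allI impI)
  fix X assume X: "X \<subseteq> fst A" "X \<noteq> {}"
    and closed: "\<forall>a\<in>X. \<forall>b\<in>fst A. (a, b) \<in> snd A \<longrightarrow> b \<in> X"
  have bij: "bij_betw f (fst A) (fst C)"
    and adj: "\<And>x y. x \<in> fst A \<Longrightarrow> y \<in> fst A \<Longrightarrow> (x, y) \<in> snd A \<longleftrightarrow> (f x, f y) \<in> snd C"
    using iso unfolding graph_iso_by_def by auto
  have "\<forall>a\<in>f ` X. \<forall>b\<in>fst C. (a, b) \<in> snd C \<longrightarrow> b \<in> f ` X"
  proof (intro ballI impI)
    fix a b assume "a \<in> f ` X" "b \<in> fst C" "(a, b) \<in> snd C"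
    moreover obtain y where "y \<in> fst A" "b = f y"
      using \<open>b \<in> fst C\<close> bij unfolding bij_betw_def by auto
    ultimately show "b \<in> f ` X" using adj closed X(1) by blast
  qed
  moreover have "f ` X \<subseteq> fst C" using X(1) bij bij_betwE by blast
  ultimately have "f ` X = f ` fst A" using conn X(2) bij unfolding graph_connected_def bij_betw_def by blast
  then show "X = fst A"
    using bij X(1) unfolding bij_betw_def by (metis inj_on_image_eq_iff order_refl)
qed

lemma card_cliques_graph_iso_by:
  assumes iso: "graph_iso_by f A C"
  shows "card {c \<in> cliques A. card c = k} = card {c \<in> cliques C. card c = k}"
proof -
  have bij: "bij_betw f (fst A) (fst C)"
    and adj: "\<And>x y. x \<in> fst A \<Longrightarrow> y \<in> fst A \<Longrightarrow> (x, y) \<in> snd A \<longleftrightarrow> (f x, f y) \<in> snd C"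
    using iso unfolding graph_iso_by_def by auto
  have inj: "inj_on f (fst A)" using bij unfolding bij_betw_def by auto
  have card_image_f: "card (f ` c) = card c" if "c \<subseteq> fst A" for c
    using card_image[OF inj_on_subset[OF inj that]] .
  have inj_image: "inj_on (image f) {c \<in> cliques A. card c = k}"
  proof (rule inj_onI)
    fix c d assume "c \<in> {c \<in> cliques A. card c = k}" "d \<in> {c \<in> cliques A. card c = k}" "f ` c = f ` d"
    then show "c = d" using inj unfolding cliques_def by (metis (no_types, lifting) inj_on_image_eq_iff mem_Collect_eq)
  qed
  have "image f ` {c \<in> cliques A. card c = k} = {c \<in> cliques C. card c = k}"
  proof (intro equalityI subsetI)
    fix c' assume "c' \<in> image f ` {c \<in> cliques A. card c = k}"
    then obtain c where c: "c \<in> cliques A" "card c = k" "c' = f ` c" by auto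
    have c_A: "c \<subseteq> fst A" "c \<noteq> {}"
      and c_clique: "\<And>x y. x \<in> c \<Longrightarrow> y \<in> c \<Longrightarrow> x \<noteq> y \<Longrightarrow> (x, y) \<in> snd A"
      using c(1) unfolding cliques_def by auto
    have "f ` c \<subseteq> fst C" using c_A(1) bij bij_betwE by blast
    moreover have "\<forall>x\<in>f ` c. \<forall>y\<in>f ` c. x \<noteq> y \<longrightarrow> (x, y) \<in> snd C"
      using c_clique adj c_A(1) by blast
    ultimately show "c' \<in> {c \<in> cliques C. card c = k}"
      using c c_A card_image_f unfolding cliques_def by auto
  next
    fix c' assume c': "c' \<in> {c \<in> cliques C. card c = k}"
    have c'_C: "c' \<subseteq> fst C" "c' \<noteq> {}"
      and c'_clique: "\<And>x y. x \<in> c' \<Longrightarrow> y \<in> c' \<Longrightarrow> x \<noteq> y \<Longrightarrow> (x, y) \<in> snd C"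
      using c' unfolding cliques_def by auto
    define c where "c = {x \<in> fst A. f x \<in> c'}"
    have c_A: "c \<subseteq> fst A" unfolding c_def by auto
    have img: "f ` c = c'"
    proof (intro equalityI subsetI)
      fix z assume "z \<in> c'"
      then obtain y where "y \<in> fst A" "z = f y" using c'_C(1) bij unfolding bij_betw_def by auto
      then show "z \<in> f ` c" unfolding c_def using \<open>z \<in> c'\<close> by auto
    qed (auto simp: c_def)
    have "\<forall>x\<in>c. \<forall>y\<in>c. x \<noteq> y \<longrightarrow> (x, y) \<in> snd A"
    proof (intro ballI impI)
      fix x y assume "x \<in> c" "y \<in> c" "x \<noteq> y"
      moreover then have "f x \<noteq> f y" using inj c_A unfolding inj_on_def by auto
      ultimately show "(x, y) \<in> snd A" using c'_clique adj c_A unfolding c_def by auto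
    qed
    then have "c \<in> cliques A" using c_A img c'_C(2) unfolding cliques_def by auto
    moreover have "card c = k" using card_image_f[OF c_A] img c' by auto
    ultimately show "c' \<in> image f ` {c \<in> cliques A. card c = k}" using img by auto
  qed
  then show ?thesis using card_image[OF inj_image] by simp
qed

lemma circle_spheres_graph_iso_by:
  assumes iso: "graph_iso_by f A C"
    and circles: "\<And>x. x \<in> fst C \<Longrightarrow> \<exists>n\<ge>3. graph_iso (sphere C x) (cycle_graph n)"
    and u: "u \<in> fst A"
  shows "two_regular (sphere A u) \<and> graph_connected (sphere A u)"
proof -
  have "f u \<in> fst C" using iso u unfolding graph_iso_by_def using bij_betwE by blast
  then obtain n g where n: "3 \<le> n" and "graph_iso_by g (sphere C (f u)) (cycle_graph n)"
    using circles unfolding graph_iso_iff_graph_iso_by by blast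
  then have "two_regular (sphere C (f u))" and "graph_connected (sphere C (f u))"
    using two_regular_graph_iso_by two_regular_cycle_graph
      graph_connected_graph_iso_by graph_connected_cycle_graph by blast+
  then show ?thesis
    using graph_iso_by_sphere[OF iso u] two_regular_graph_iso_by graph_connected_graph_iso_by by blast
qed

lemma graph_iso_cycle_graph:
  assumes distinct: "distinct xs" and verts: "fst T = set xs"
    and adj: "\<forall>i<length xs. \<forall>j<length xs.
      (xs ! i, xs ! j) \<in> snd T \<longleftrightarrow> j = (i + 1) mod length xs \<or> i = (j + 1) mod length xs"
  shows "graph_iso T (cycle_graph (length xs))"
proof -
  define n where "n = length xs"
  define f where "f = the_inv_into {..<n} ((!) xs)"
  have bij_nth: "bij_betw ((!) xs) {..<n} (set xs)" using bij_betw_nth[OF distinct] n_def by simp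
  have bij_f: "bij_betw f (set xs) {..<n}" unfolding f_def by (rule bij_betw_the_inv_into[OF bij_nth])
  have nth_f: "xs ! (f a) = a" if "a \<in> set xs" for a
    unfolding f_def using f_the_inv_into_f_bij_betw[OF bij_nth that] .
  have f_less: "f a < n" if "a \<in> set xs" for a using bij_f that bij_betwE by fastforce
  have "graph_iso_by f T (cycle_graph n)"
    unfolding graph_iso_by_def
  proof
    show "bij_betw f (fst T) (fst (cycle_graph n))"
      using bij_f unfolding verts cycle_graph_def by (simp add: atLeast0LessThan)
    show "\<forall>a\<in>fst T. \<forall>b\<in>fst T. (a, b) \<in> snd T \<longleftrightarrow> (f a, f b) \<in> snd (cycle_graph n)"
    proof (intro ballI)
      fix a b assume "a \<in> fst T" "b \<in> fst T"
      then have a: "a \<in> set xs" and b: "b \<in> set xs" using verts by auto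
      have "(a, b) \<in> snd T \<longleftrightarrow> (xs ! f a, xs ! f b) \<in> snd T" using nth_f[OF a] nth_f[OF b] by simp
      also have "\<dots> \<longleftrightarrow> f b = (f a + 1) mod n \<or> f a = (f b + 1) mod n"
        using adj f_less[OF a] f_less[OF b] unfolding n_def by blast
      also have "\<dots> \<longleftrightarrow> (f a, f b) \<in> snd (cycle_graph n)"
        unfolding cycle_graph_def using f_less[OF a] f_less[OF b] by simp
      finally show "(a, b) \<in> snd T \<longleftrightarrow> (f a, f b) \<in> snd (cycle_graph n)" .
    qed
  qed
  then show ?thesis unfolding graph_iso_iff_graph_iso_by n_def by blast
qed

text \<open>A 12-vertex triangulation of the real projective plane: 33 edges and 22 triangles, hence
  Euler characteristic 1. The lists in rp2_rims are the neighbourhoods of the vertices 0, ..., 11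
  in cyclic order.\<close>

definition rp2_edge_list :: "(nat \<times> nat) list" where
  "rp2_edge_list = [(0,4), (0,5), (0,6), (0,8), (0,9), (0,10), (1,3), (1,5), (1,6), (1,7), (1,9),
    (1,10), (1,11), (2,3), (2,4), (2,5), (2,7), (2,8), (2,9), (2,11), (3,5), (3,6), (3,8), (4,5),
    (4,6), (4,7), (5,10), (6,7), (6,8), (7,11), (8,9), (9,10), (9,11)]"

definition rp2_adj :: "nat \<Rightarrow> nat \<Rightarrow> bool" where
  "rp2_adj a b \<longleftrightarrow> (a, b) \<in> set rp2_edge_list \<or> (b, a) \<in> set rp2_edge_list"

definition rp2 :: "nat graph" where
  "rp2 = ({0..<12}, {(a, b). rp2_adj a b})"

definition rp2_rims :: "nat list list" where
  "rp2_rims = [[4,5,10,9,8,6], [3,5,10,9,11,7,6], [3,8,9,11,7,4,5], [1,5,2,8,6], [0,5,2,7,6],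
    [0,10,1,3,2,4], [0,8,3,1,7,4], [1,11,2,4,6], [0,9,2,3,6], [0,8,2,11,1,10], [0,9,1,5], [1,9,2,7]]"

definition is_rim :: "nat \<Rightarrow> nat list \<Rightarrow> bool" where
  "is_rim x xs \<longleftrightarrow> distinct xs \<and> set xs = set (filter (rp2_adj x) [0..<12]) \<and> 4 \<le> length xs \<and>
     list_all (\<lambda>i. list_all (\<lambda>j. rp2_adj (xs ! i) (xs ! j) \<longleftrightarrow>
       j = (i + 1) mod length xs \<or> i = (j + 1) mod length xs) [0..<length xs]) [0..<length xs]"

lemma is_rim_rp2_rims: "list_all (\<lambda>x. is_rim x (rp2_rims ! x)) [0..<12]"
  by code_simp

lemma rp2_edge_list_facts:
  "list_all (\<lambda>(a, b). a < b \<and> b < 12) rp2_edge_list" "distinct rp2_edge_list" "length rp2_edge_list = 33"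
  by code_simp+

lemma rp2_edge_list_less: "(a, b) \<in> set rp2_edge_list \<Longrightarrow> a < b \<and> b < 12"
  using rp2_edge_list_facts(1) by (auto simp: list_all_iff)

lemma wf_graph_rp2: "wf_graph rp2"
  unfolding wf_graph_def rp2_def rp2_adj_def using rp2_edge_list_less by fastforce

lemma rp2_spheres: "x \<in> fst rp2 \<Longrightarrow> \<exists>n\<ge>4. graph_iso (sphere rp2 x) (cycle_graph n)"
proof -
  assume "x \<in> fst rp2"
  then have "is_rim x (rp2_rims ! x)" using is_rim_rp2_rims by (simp add: rp2_def list_all_iff)
  then have "distinct (rp2_rims ! x)" "fst (sphere rp2 x) = set (rp2_rims ! x)" "4 \<le> length (rp2_rims ! x)"
    and "\<forall>i<length (rp2_rims ! x). \<forall>j<length (rp2_rims ! x). (rp2_rims ! x ! i, rp2_rims ! x ! j) \<in> snd (sphere rp2 x)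
      \<longleftrightarrow> j = (i + 1) mod length (rp2_rims ! x) \<or> i = (j + 1) mod length (rp2_rims ! x)"
    unfolding is_rim_def sphere_def induced_def rp2_def
    using rp2_edge_list_less by (auto simp: list_all_iff rp2_adj_def)
  then show ?thesis using graph_iso_cycle_graph by blast
qed

lemma card_rp2_vertices: "card (fst rp2) = 12"
  by (simp add: rp2_def)

lemma card_rp2_edges: "card {c \<in> cliques rp2. card c = 2} = 33"
proof -
  have edges: "{c \<in> cliques rp2. card c = 2} = (\<lambda>(a, b). {a, b}) ` set rp2_edge_list"
  proof (intro equalityI subsetI)
    fix c assume c: "c \<in> {c \<in> cliques rp2. card c = 2}"
    then obtain a b where ab: "c = {a, b}" "a \<noteq> b" by (auto simp: card_2_iff)
    then have "rp2_adj a b" using c unfolding cliques_def rp2_def by auto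
    then show "c \<in> (\<lambda>(a, b). {a, b}) ` set rp2_edge_list"
      using ab unfolding rp2_adj_def by (auto simp: insert_commute)
  next
    fix c assume "c \<in> (\<lambda>(a, b). {a, b}) ` set rp2_edge_list"
    then obtain a b where ab: "(a, b) \<in> set rp2_edge_list" "c = {a, b}" by auto
    then show "c \<in> {c \<in> cliques rp2. card c = 2}"
      using rp2_edge_list_less[OF ab(1)] unfolding cliques_def rp2_def rp2_adj_def by auto
  qed
  have "inj_on (\<lambda>(a, b). {a, b}) (set rp2_edge_list)"
  proof (rule inj_onI)
    fix p q assume p: "p \<in> set rp2_edge_list" and q: "q \<in> set rp2_edge_list"
      and pq: "(\<lambda>(a, b). {a :: nat, b}) p = (\<lambda>(a, b). {a, b}) q"
    obtain a b c d where "p = (a, b)" "q = (c, d)" by fastforce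
    moreover have "a < b" "c < d" using rp2_edge_list_less p q calculation by auto
    moreover have "{a, b} = {c, d}" using pq calculation by simp
    ultimately show "p = q" by (metis doubleton_eq_iff not_less_iff_gr_or_eq)
  qed
  then show ?thesis
    unfolding edges using card_image distinct_card[OF rp2_edge_list_facts(2)] rp2_edge_list_facts(3)
    by metis
qed

theorem mainTheorem7:
  shows "\<exists>G :: nat graph. wf_graph G
     \<and> (\<forall>x\<in>fst G. \<exists>n\<ge>4. graph_iso (sphere G x) (cycle_graph n))
     \<and> \<not> (\<exists>H :: nat graph. geoG 3 H \<and> graph_iso (geo_boundary 3 H) G)"
proof (intro exI conjI)
  show "wf_graph rp2" by (rule wf_graph_rp2)
  show "\<forall>x\<in>fst rp2. \<exists>n\<ge>4. graph_iso (sphere rp2 x) (cycle_graph n)" using rp2_spheres by blast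
  show "\<not> (\<exists>H :: nat graph. geoG 3 H \<and> graph_iso (geo_boundary 3 H) rp2)"
  proof
    assume "\<exists>H :: nat graph. geoG 3 H \<and> graph_iso (geo_boundary 3 H) rp2"
    then obtain H :: "nat graph" and f where H: "geoG 3 H" and iso: "graph_iso_by f (geo_boundary 3 H) rp2"
      unfolding graph_iso_iff_graph_iso_by by blast
    have "\<exists>n\<ge>3. graph_iso (sphere rp2 x) (cycle_graph n)" if x: "x \<in> fst rp2" for x
    proof -
      obtain n where "4 \<le> n" "graph_iso (sphere rp2 x) (cycle_graph n)" using rp2_spheres[OF x] by blast
      then show ?thesis by (intro exI[of _ n]) simp
    qed
    then have "even (card (fst (geo_boundary 3 H)) + card {c \<in> cliques (geo_boundary 3 H). card c = 2})"
      using even_card_boundary_vertices_edges[OF H] circle_spheres_graph_iso_by[OF iso] by blast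
    moreover have "card (fst (geo_boundary 3 H)) = 12"
      using bij_betw_same_card iso card_rp2_vertices unfolding graph_iso_by_def by metis
    moreover have "card {c \<in> cliques (geo_boundary 3 H). card c = 2} = 33"
      using card_cliques_graph_iso_by[OF iso] card_rp2_edges by simp
    ultimately show False by simp
  qed
qed

end
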